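(* If $\mathcal{N}$ is a sound, acyclic, weakly non-deterministic negotiation, then its restriction $\mathcal{N}_D$ to its deterministic processes is sound.
   Context: A negotiation is a tuple $\mathcal{N}=(\mathit{Proc},N,\mathit{dom},R,\delta)$ where $\mathit{Proc}$ is a finite set of processes, $N$ is a finite set of nodes, $\mathit{dom}:N\to 2^{\mathit{Proc}}\setminus\{\emptyset\}$, there are two distinguished nodes $n_{\mathit{init}},n_{\mathit{fin}}$ with $\mathit{dom}(n_{\mathit{init}})=\mathit{dom}(n_{\mathit{fin}})=\mathit{Proc}$, $R$ is a set of results, each node $n$ has a set $\mathit{out}(n)\subseteq R$ of results (nonempty for $n\neq n_{\mathit{fin}}$), and $\delta(n,a,p)\subseteq N$ is defined and nonempty exactly when $a\in\mathit{out}(n)$ and $p\in\mathit{dom}(n)$, with $p\in\mathit{dom}(n')$ for all $n'\in\delta(n,a,p)$. A configuration is a map $C$ assigning to each process a nonempty set of nodes; $C_{\mathit{init}}(p)=\{n_{\mathit{init}}\}$, $C_{\mathit{fin}}(p)=\{n_{\mathit{fin}}\}$. A node $n$ is enabled in $C$ if $n\in C(p)$ for all $p\in\mathit{dom}(n)$. If $n$ is enabled and $a\in\mathit{out}(n)$ then $C\xrightarrow{(n,a)}C'$ with $C'(p)=\delta(n,a,p)$ for $p\in\mathit{dom}(n)$, $C'(p)=C(p)$ otherwise. A run is a sequence of such steps; $\mathcal{N}$ is sound if every finite run from $C_{\mathit{init}}$ can be extended to a finite run ending in $C_{\mathit{fin}}$. The graph of $\mathcal{N}$ has vertex set $N$ and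 edges $n\to n'$ whenever $n'\in\delta(n,a,p)$ for some $a,p$; $\mathcal{N}$ is acyclic if this graph is. A process $p$ is deterministic if $\delta(n,a,p)$ is a singleton for all $n$ with $p\in\mathit{dom}(n)$ and $a\in\mathit{out}(n)$; $\mathcal{N}$ is weakly non-deterministic if every node has a deterministic process in its domain. The restriction of $\mathcal{N}$ to $\mathit{Proc}'\subseteq\mathit{Proc}$ is the negotiation $(\mathit{Proc}',N',\mathit{dom}',R,\delta')$ with $N'=\{n\in N:\mathit{dom}(n)\cap\mathit{Proc}'\neq\emptyset\}$, $\mathit{dom}'(n)=\mathit{dom}(n)\cap\mathit{Proc}'$, $\delta'(n,r,p)=\delta(n,r,p)\cap N'$; $\mathcal{N}_D$ is the restriction to the set of deterministic processes. *)

theory Defs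
  imports Main
begin

text \<open>The partial function delta is modelled as a total function
whose value is the empty set where delta is undefined.\<close>

record ('p, 'n, 'r) negotiation =
  Proc  :: "'p set"
  Nodes :: "'n set"
  dm    :: "'n \<Rightarrow> 'p set"
  Res   :: "'r set"
  out   :: "'n \<Rightarrow> 'r set"
  delta :: "'n \<Rightarrow> 'r \<Rightarrow> 'p \<Rightarrow> 'n set"
  ninit :: "'n"
  nfin  :: "'n"

definition is_negotiation :: "('p, 'n, 'r) negotiation \<Rightarrow> bool" where
  "is_negotiation \<N> \<longleftrightarrow>
     finite (Proc \<N>) \<and> finite (Nodes \<N>) \<and>
     (\<forall>n\<in>Nodes \<N>. dm \<N> n \<noteq> {} \<and> dm \<N> n \<subseteq> Proc \<N>) \<and>
     ninit \<N> \<in> Nodes \<N> \<and> nfin \<N> \<in> Nodes \<N> \<and>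
     dm \<N> (ninit \<N>) = Proc \<N> \<and> dm \<N> (nfin \<N>) = Proc \<N> \<and>
     (\<forall>n\<in>Nodes \<N>. out \<N> n \<subseteq> Res \<N>) \<and>
     (\<forall>n\<in>Nodes \<N>. n \<noteq> nfin \<N> \<longrightarrow> out \<N> n \<noteq> {}) \<and>
     (\<forall>n a p. n \<in> Nodes \<N> \<longrightarrow>
        (delta \<N> n a p \<noteq> {} \<longleftrightarrow> a \<in> out \<N> n \<and> p \<in> dm \<N> n)) \<and>
     (\<forall>n a p. n \<in> Nodes \<N> \<longrightarrow> a \<in> out \<N> n \<longrightarrow> p \<in> dm \<N> n \<longrightarrow>
        delta \<N> n a p \<subseteq> Nodes \<N> \<and> (\<forall>n'\<in>delta \<N> n a p. p \<in> dm \<N> n'))"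

text \<open>Configurations: maps from processes to sets of nodes; only the values on
Proc matter, and they are the empty set outside Proc.\<close>

definition C_init :: "('p, 'n, 'r) negotiation \<Rightarrow> 'p \<Rightarrow> 'n set" where
  "C_init \<N> = (\<lambda>p. if p \<in> Proc \<N> then {ninit \<N>} else {})"

definition C_fin :: "('p, 'n, 'r) negotiation \<Rightarrow> 'p \<Rightarrow> 'n set" where
  "C_fin \<N> = (\<lambda>p. if p \<in> Proc \<N> then {nfin \<N>} else {})"

definition enabled :: "('p, 'n, 'r) negotiation \<Rightarrow> ('p \<Rightarrow> 'n set) \<Rightarrow> 'n \<Rightarrow> bool" where
  "enabled \<N> C n \<longleftrightarrow> (\<forall>p\<in>dm \<N> n. n \<in> C p)"

definition step :: "('p, 'n, 'r) negotiation \<Rightarrow> ('p \<Rightarrow> 'n set) \<Rightarrow> 'n \<Rightarrow> 'r \<Rightarrow> ('p \<Rightarrow> 'n set) \<Rightarrow> bool" where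
  "step \<N> C n a C' \<longleftrightarrow> n \<in> Nodes \<N> \<and> enabled \<N> C n \<and> a \<in> out \<N> n \<and>
     C' = (\<lambda>p. if p \<in> dm \<N> n then delta \<N> n a p else C p)"

definition step_rel :: "('p, 'n, 'r) negotiation \<Rightarrow> ('p \<Rightarrow> 'n set) \<Rightarrow> ('p \<Rightarrow> 'n set) \<Rightarrow> bool" where
  "step_rel \<N> C C' \<longleftrightarrow> (\<exists>n a. step \<N> C n a C')"

abbreviation reach :: "('p, 'n, 'r) negotiation \<Rightarrow> ('p \<Rightarrow> 'n set) \<Rightarrow> ('p \<Rightarrow> 'n set) \<Rightarrow> bool" where
  "reach \<N> \<equiv> (step_rel \<N>)\<^sup>*\<^sup>*"

definition sound :: "('p, 'n, 'r) negotiation \<Rightarrow> bool" where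
  "sound \<N> \<longleftrightarrow> (\<forall>C. reach \<N> (C_init \<N>) C \<longrightarrow> reach \<N> C (C_fin \<N>))"

definition graph :: "('p, 'n, 'r) negotiation \<Rightarrow> ('n \<times> 'n) set" where
  "graph \<N> = {(n, n'). n \<in> Nodes \<N> \<and> (\<exists>a p. n' \<in> delta \<N> n a p)}"

definition acyclic_neg :: "('p, 'n, 'r) negotiation \<Rightarrow> bool" where
  "acyclic_neg \<N> \<longleftrightarrow> acyclic (graph \<N>)"

definition deterministic :: "('p, 'n, 'r) negotiation \<Rightarrow> 'p \<Rightarrow> bool" where
  "deterministic \<N> p \<longleftrightarrow>
     (\<forall>n\<in>Nodes \<N>. p \<in> dm \<N> n \<longrightarrow> (\<forall>a\<in>out \<N> n. \<exists>n'. delta \<N> n a p = {n'}))"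

definition weakly_nondet :: "('p, 'n, 'r) negotiation \<Rightarrow> bool" where
  "weakly_nondet \<N> \<longleftrightarrow> (\<forall>n\<in>Nodes \<N>. \<exists>p\<in>dm \<N> n. deterministic \<N> p)"

definition restrict_neg :: "('p, 'n, 'r) negotiation \<Rightarrow> 'p set \<Rightarrow> ('p, 'n, 'r) negotiation" where
  "restrict_neg \<N> P =
     (let N' = {n \<in> Nodes \<N>. dm \<N> n \<inter> P \<noteq> {}} in
      \<lparr> Proc = P, Nodes = N', dm = (\<lambda>n. dm \<N> n \<inter> P), Res = Res \<N>, out = out \<N>,
        delta = (\<lambda>n r p. delta \<N> n r p \<inter> N'), ninit = ninit \<N>, nfin = nfin \<N> \<rparr>)"

definition det_procs :: "('p, 'n, 'r) negotiation \<Rightarrow> 'p set" where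
  "det_procs \<N> = {p \<in> Proc \<N>. deterministic \<N> p}"

definition restrict_D :: "('p, 'n, 'r) negotiation \<Rightarrow> ('p, 'n, 'r) negotiation" where
  "restrict_D \<N> = restrict_neg \<N> (det_procs \<N>)"

end

theory Submission
  imports Defs
begin

text \<open>In the restriction every process is deterministic, so in every reachable configuration
each process sits at a single node. By acyclicity each node then fires at most once per run, and
steps of different nodes that are enabled together commute. Given a run \<sigma> of the restriction,
soundness of \<N> yields a complete run \<tau> of \<N> choosing \<sigma>'s result at every node that \<sigma>
executes; it projects to a complete run of the restriction. A node fired in \<sigma> is never the
final node, so some process leaves it in \<tau> as well: all steps of \<sigma> occur in \<tau>, and commuting
them to the front shows that the end of \<sigma> reaches the final configuration.\<close>

section \<open>Runs\<close>

inductive run :: "('p, 'n, 'r) negotiation \<Rightarrow> ('p \<Rightarrow> 'n set) \<Rightarrow> ('n \<times> 'r) list \<Rightarrow> ('p \<Rightarrow> 'n set) \<Rightarrow> bool"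
  for \<N> where
  run_Nil: "run \<N> C [] C"
| run_Cons: "step \<N> C n a C' \<Longrightarrow> run \<N> C' es C'' \<Longrightarrow> run \<N> C ((n, a) # es) C''"

lemma reach_iff_run: "reach \<N> C C' \<longleftrightarrow> (\<exists>es. run \<N> C es C')"
proof
  assume "reach \<N> C C'"
  then show "\<exists>es. run \<N> C es C'"
    by (induction rule: converse_rtranclp_induct) (auto simp: step_rel_def intro: run.intros)
next
  assume "\<exists>es. run \<N> C es C'"
  then obtain es where "run \<N> C es C'" ..
  then show "reach \<N> C C'"
    by induction (auto simp: step_rel_def intro: converse_rtranclp_into_rtranclp)
qed

lemma run_Nil_iff [simp]: "run \<N> C [] C' \<longleftrightarrow> C' = C"
  by (auto intro: run.intros elim: run.cases)

lemma run_Cons_iff [simp]: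
  "run \<N> C ((n, a) # es) C'' \<longleftrightarrow> (\<exists>C'. step \<N> C n a C' \<and> run \<N> C' es C'')"
  by (auto intro: run.intros elim: run.cases)

lemma run_append: "run \<N> C (xs @ ys) C'' \<longleftrightarrow> (\<exists>C'. run \<N> C xs C' \<and> run \<N> C' ys C'')"
  by (induction xs arbitrary: C) (auto, blast+)

lemma run_snoc: "run \<N> C (es @ [(n, a)]) C'' \<longleftrightarrow> (\<exists>C'. run \<N> C es C' \<and> step \<N> C' n a C'')"
  by (simp add: run_append)

lemma step_unique: "step \<N> C n a C1 \<Longrightarrow> step \<N> C n a C2 \<Longrightarrow> C1 = C2"
  by (simp add: step_def)

lemma step_other_result: "step \<N> C n a C' \<Longrightarrow> b \<in> out \<N> n \<Longrightarrow> \<exists>C''. step \<N> C n b C''"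
  by (auto simp: step_def)

lemma run_results: "run \<N> C es C' \<Longrightarrow> (n, a) \<in> set es \<Longrightarrow> n \<in> Nodes \<N> \<and> a \<in> out \<N> n"
  by (induction rule: run.induct) (auto simp: step_def)

definition moves_to :: "('p, 'n, 'r) negotiation \<Rightarrow> ('n \<times> 'r) list \<Rightarrow> 'p \<Rightarrow> 'n \<Rightarrow> bool" where
  "moves_to \<N> es p x \<longleftrightarrow> (\<exists>(n, a)\<in>set es. p \<in> dm \<N> n \<and> delta \<N> n a p = {x})"

lemma moves_to_Cons:
  "moves_to \<N> ((n, a) # es) p x \<longleftrightarrow> p \<in> dm \<N> n \<and> delta \<N> n a p = {x} \<or> moves_to \<N> es p x"
  by (auto simp: moves_to_def)

lemma run_singleton_origin:
  "run \<N> C es C' \<Longrightarrow> C' p = {x} \<Longrightarrow> C p = {x} \<or> moves_to \<N> es p x"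
  by (induction rule: run.induct) (auto simp: step_def moves_to_Cons split: if_splits)

definition consistent_results :: "('n \<times> 'r) list \<Rightarrow> ('n \<times> 'r) list \<Rightarrow> bool" where
  "consistent_results \<sigma> \<tau> \<longleftrightarrow> (\<forall>m b b'. (m, b) \<in> set \<sigma> \<longrightarrow> (m, b') \<in> set \<tau> \<longrightarrow> b = b')"

section \<open>Deterministic acyclic negotiations\<close>

locale deterministic_acyclic_negotiation =
  fixes \<N> :: "('p, 'n, 'r) negotiation"
  assumes dm_nonempty: "n \<in> Nodes \<N> \<Longrightarrow> dm \<N> n \<noteq> {}"
    and dm_subset: "n \<in> Nodes \<N> \<Longrightarrow> dm \<N> n \<subseteq> Proc \<N>"
    and delta_singleton:
      "n \<in> Nodes \<N> \<Longrightarrow> p \<in> dm \<N> n \<Longrightarrow> a \<in> out \<N> n \<Longrightarrow> \<exists>x. delta \<N> n a p = {x}"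
    and acyclic_graph: "acyclic (graph \<N>)"
begin

definition singleton_config :: "('p \<Rightarrow> 'n set) \<Rightarrow> bool" where
  "singleton_config C \<longleftrightarrow> (\<forall>p\<in>Proc \<N>. \<exists>x. C p = {x})"

lemma singleton_config_C_init: "singleton_config (C_init \<N>)"
  by (simp add: singleton_config_def C_init_def)

lemma step_singleton_config: "step \<N> C n a C' \<Longrightarrow> singleton_config C \<Longrightarrow> singleton_config C'"
  unfolding singleton_config_def step_def using delta_singleton by fastforce

lemma run_singleton_config: "run \<N> C es C' \<Longrightarrow> singleton_config C \<Longrightarrow> singleton_config C'"
  by (induction rule: run.induct) (auto intro: step_singleton_config)

lemma step_at_node: "step \<N> C n a C' \<Longrightarrow> singleton_config C \<Longrightarrow> p \<in> dm \<N> n \<Longrightarrow> C p = {n}"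
  unfolding step_def singleton_config_def enabled_def using dm_subset by fastforce

lemma step_graph_edge:
  assumes "step \<N> C n a C'" "p \<in> dm \<N> n"
  obtains y where "C' p = {y}" "(n, y) \<in> graph \<N>"
proof -
  from assms(1) have "n \<in> Nodes \<N>" "a \<in> out \<N> n" by (auto simp: step_def)
  with assms(2) obtain y where "delta \<N> n a p = {y}" using delta_singleton by blast
  with assms \<open>n \<in> Nodes \<N>\<close> show thesis using that by (auto simp: step_def graph_def)
qed

lemma run_graph_path: "run \<N> C es C' \<Longrightarrow> C p = {x} \<Longrightarrow> C' p = {z} \<Longrightarrow> (x, z) \<in> (graph \<N>)\<^sup>*"
proof (induction arbitrary: x rule: run.induct)
  case (run_Nil C)
  then show ?case by simp
next
  case (run_Cons C n a C1 es C'')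
  show ?case
  proof (cases "p \<in> dm \<N> n")
    case True
    with run_Cons.hyps(1) obtain y where "C1 p = {y}" "(n, y) \<in> graph \<N>"
      by (rule step_graph_edge)
    moreover from True run_Cons.hyps(1) run_Cons.prems(1) have "x = n"
      by (auto simp: step_def enabled_def)
    ultimately show ?thesis
      using run_Cons.IH run_Cons.prems(2) by (blast intro: converse_rtrancl_into_rtrancl)
  next
    case False
    with run_Cons show ?thesis by (simp add: step_def)
  qed
qed

lemma run_never_returns:
  assumes "step \<N> C n a C'" "p \<in> dm \<N> n" "run \<N> C' es C''"
  shows "C'' p \<noteq> {n}"
proof
  assume returned: "C'' p = {n}"
  from assms(1,2) obtain y where "C' p = {y}" and edge: "(n, y) \<in> graph \<N>"
    by (rule step_graph_edge)
  with assms(3) returned have "(y, n) \<in> (graph \<N>)\<^sup>*" using run_graph_path by blast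
  with edge acyclic_graph show False
    by (meson acyclic_def rtrancl_into_trancl2)
qed

lemma run_distinct_nodes: "run \<N> C es C' \<Longrightarrow> singleton_config C \<Longrightarrow> distinct (map fst es)"
proof (induction rule: run.induct)
  case (run_Nil C)
  then show ?case by simp
next
  case (run_Cons C n a C1 es C'')
  have C1: "singleton_config C1" using run_Cons step_singleton_config by blast
  from run_Cons.hyps(1) have "n \<in> Nodes \<N>" by (simp add: step_def)
  then obtain p where p: "p \<in> dm \<N> n" using dm_nonempty by blast
  have "n \<notin> fst ` set es"
  proof
    assume "n \<in> fst ` set es"
    then obtain a' es1 es2 where "es = es1 @ (n, a') # es2"
      by (metis (no_types) eq_fst_iff image_iff split_list)
    with run_Cons.hyps(2) obtain C3 C4 where "run \<N> C1 es1 C3" "step \<N> C3 n a' C4"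
      by (auto simp: run_append)
    moreover from this have "C3 p = {n}"
      using C1 p run_singleton_config step_at_node by blast
    ultimately show False using run_never_returns run_Cons.hyps(1) p by blast
  qed
  with run_Cons.IH C1 show ?case by simp
qed

lemma no_run_back: "step \<N> C n a C' \<Longrightarrow> singleton_config C \<Longrightarrow> \<not> run \<N> C' es C"
proof
  assume "step \<N> C n a C'" "singleton_config C" "run \<N> C' es C"
  moreover from \<open>step \<N> C n a C'\<close> have "n \<in> Nodes \<N>" by (simp add: step_def)
  then obtain p where "p \<in> dm \<N> n" using dm_nonempty by blast
  ultimately show False using run_never_returns step_at_node by metis
qed

lemma run_leaves_node:
  "run \<N> C es C' \<Longrightarrow> singleton_config C \<Longrightarrow> C p = {x} \<or> moves_to \<N> es p x \<Longrightarrow>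
   C' p \<noteq> {x} \<Longrightarrow> x \<in> fst ` set es"
proof (induction rule: run.induct)
  case (run_Nil C)
  then show ?case by (simp add: moves_to_def)
next
  case (run_Cons C n a C1 es C'')
  show ?case
  proof (cases "n = x")
    case False
    have "C1 p = {x} \<or> moves_to \<N> es p x"
    proof (cases "C p = {x}")
      case True
      with False run_Cons.hyps(1) run_Cons.prems(1) have "p \<notin> dm \<N> n"
        using step_at_node by fastforce
      with True run_Cons.hyps(1) show ?thesis by (simp add: step_def)
    next
      case False
      with run_Cons.prems(2) run_Cons.hyps(1) show ?thesis
        by (auto simp: moves_to_Cons step_def)
    qed
    with run_Cons step_singleton_config show ?thesis by force
  qed simp
qed

lemma run_step_commute:
  "run \<N> C0 t C1 \<Longrightarrow> singleton_config C0 \<Longrightarrow> m \<notin> fst ` set t \<Longrightarrow> enabled \<N> C0 m \<Longrightarrow>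
   step \<N> C1 m b C2 \<Longrightarrow> \<exists>C0'. step \<N> C0 m b C0' \<and> run \<N> C0' t C2"
proof (induction arbitrary: C2 rule: run.induct)
  case (run_Nil C)
  then show ?case by (blast intro: run.intros)
next
  case (run_Cons C0 n a Cx t C1)
  have disjoint: "dm \<N> n \<inter> dm \<N> m = {}"
  proof (rule ccontr)
    assume "dm \<N> n \<inter> dm \<N> m \<noteq> {}"
    then obtain p where "p \<in> dm \<N> n" "p \<in> dm \<N> m" by blast
    with run_Cons.hyps(1) run_Cons.prems have "C0 p = {n}" "m \<in> C0 p" "m \<noteq> n"
      using step_at_node unfolding enabled_def by auto
    then show False by simp
  qed
  from run_Cons.prems(3) disjoint run_Cons.hyps(1) have "enabled \<N> Cx m"
    by (auto simp: enabled_def step_def)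
  moreover from run_Cons.hyps(1) run_Cons.prems(1) have "singleton_config Cx"
    by (rule step_singleton_config)
  moreover from run_Cons.prems(2) have "m \<notin> fst ` set t" by simp
  ultimately obtain Cx' where Cx': "step \<N> Cx m b Cx'" "run \<N> Cx' t C2"
    using run_Cons.IH run_Cons.prems(4) by blast
  define C0' where "C0' = (\<lambda>p. if p \<in> dm \<N> m then delta \<N> m b p else C0 p)"
  from Cx'(1) run_Cons.prems(3) have "step \<N> C0 m b C0'"
    by (simp add: step_def C0'_def)
  moreover from Cx'(1) run_Cons.hyps(1) disjoint have "step \<N> C0' n a Cx'"
    by (auto simp: step_def enabled_def C0'_def fun_eq_iff)
  ultimately show ?case using Cx'(2) by (blast intro: run.intros)
qed

text \<open>The first step of \<sigma> occurs in \<tau>; it commutes to the front of \<tau> because its node is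
enabled at the start and fires only once.\<close>
lemma reach_of_subset_run:
  "run \<N> C0 \<sigma> C \<Longrightarrow> run \<N> C0 \<tau> E \<Longrightarrow> singleton_config C0 \<Longrightarrow> set \<sigma> \<subseteq> set \<tau> \<Longrightarrow> reach \<N> C E"
proof (induction arbitrary: \<tau> rule: run.induct)
  case (run_Nil C)
  then show ?case by (auto simp: reach_iff_run)
next
  case (run_Cons C0 m b C0' \<sigma> C)
  from run_Cons.prems(3) have "(m, b) \<in> set \<tau>" by simp
  then obtain t1 t2 where \<tau>: "\<tau> = t1 @ (m, b) # t2" by (blast dest: split_list)
  with run_Cons.prems(1) obtain C1 C2 where
    t1: "run \<N> C0 t1 C1" and m: "step \<N> C1 m b C2" and t2: "run \<N> C2 t2 E"
    by (auto simp: run_append)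
  from run_Cons.prems(1,2) have "distinct (map fst \<tau>)" by (rule run_distinct_nodes)
  with \<tau> have "m \<notin> fst ` set t1" by auto
  moreover from run_Cons.hyps(1) have "enabled \<N> C0 m" by (simp add: step_def)
  ultimately obtain C0'' where "step \<N> C0 m b C0''" "run \<N> C0'' t1 C2"
    using run_step_commute[OF t1 run_Cons.prems(2) _ _ m] by blast
  with run_Cons.hyps(1) have "run \<N> C0' t1 C2" using step_unique by metis
  with t2 have "run \<N> C0' (t1 @ t2) E" by (auto simp: run_append)
  moreover have "distinct (map fst ((m, b) # \<sigma>))"
    using run_Cons.hyps run_Cons.prems(2) by (intro run_distinct_nodes) (auto intro: run.intros)
  then have "(m, b) \<notin> set \<sigma>" by force
  with run_Cons.prems(3) \<tau> have "set \<sigma> \<subseteq> set (t1 @ t2)" by auto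
  moreover from run_Cons.hyps(1) run_Cons.prems(2) have "singleton_config C0'"
    by (rule step_singleton_config)
  ultimately show ?case using run_Cons.IH by blast
qed

lemma consistent_run_subset:
  assumes "run \<N> (C_init \<N>) \<sigma> C" "run \<N> (C_init \<N>) \<tau> (C_fin \<N>)"
    and "consistent_results \<sigma> \<tau>" and "out \<N> (nfin \<N>) = {}"
  shows "set \<sigma> \<subseteq> set \<tau>"
  using assms
proof (induction \<sigma> arbitrary: C rule: rev_induct)
  case Nil
  then show ?case by simp
next
  case (snoc e \<sigma>)
  obtain m b where e: "e = (m, b)" by fastforce
  with snoc.prems(1) obtain C0 where \<sigma>: "run \<N> (C_init \<N>) \<sigma> C0" and m: "step \<N> C0 m b C"
    by (auto simp: run_snoc)
  from snoc.prems(3) have "consistent_results \<sigma> \<tau>"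
    by (simp add: consistent_results_def)
  with snoc.IH \<sigma> snoc.prems(2,4) have IH: "set \<sigma> \<subseteq> set \<tau>" by blast
  from m have "m \<in> Nodes \<N>" "b \<in> out \<N> m" by (auto simp: step_def)
  with snoc.prems(4) have "m \<noteq> nfin \<N>" by auto
  from \<open>m \<in> Nodes \<N>\<close> obtain p where p: "p \<in> dm \<N> m" using dm_nonempty by blast
  with \<open>m \<in> Nodes \<N>\<close> \<open>m \<noteq> nfin \<N>\<close> have "C_fin \<N> p \<noteq> {m}"
    using dm_subset by (auto simp: C_fin_def)
  from \<sigma> m p have "C0 p = {m}"
    using run_singleton_config singleton_config_C_init step_at_node by blast
  with \<sigma> have "C_init \<N> p = {m} \<or> moves_to \<N> \<sigma> p m"
    by (rule run_singleton_origin)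
  with IH have "C_init \<N> p = {m} \<or> moves_to \<N> \<tau> p m"
    by (auto simp: moves_to_def)
  with snoc.prems(2) \<open>C_fin \<N> p \<noteq> {m}\<close> have "m \<in> fst ` set \<tau>"
    using run_leaves_node singleton_config_C_init by blast
  then obtain b' where "(m, b') \<in> set \<tau>" by force
  moreover from this snoc.prems(3) e have "b' = b"
    unfolding consistent_results_def by fastforce
  ultimately show ?case using IH e by simp
qed

end

section \<open>Restriction to the deterministic processes\<close>

lemma restrict_D_simps [simp]:
  "Proc (restrict_D \<N>) = det_procs \<N>"
  "dm (restrict_D \<N>) n = dm \<N> n \<inter> det_procs \<N>"
  "out (restrict_D \<N>) = out \<N>"
  "ninit (restrict_D \<N>) = ninit \<N>"
  "nfin (restrict_D \<N>) = nfin \<N>"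
  by (simp_all add: restrict_D_def restrict_neg_def Let_def)

lemma Nodes_restrict_D: "Nodes (restrict_D \<N>) = {n \<in> Nodes \<N>. dm \<N> n \<inter> det_procs \<N> \<noteq> {}}"
  by (simp add: restrict_D_def restrict_neg_def Let_def)

lemma delta_restrict_D: "delta (restrict_D \<N>) n a p = delta \<N> n a p \<inter> Nodes (restrict_D \<N>)"
  by (simp add: restrict_D_def restrict_neg_def Let_def)

locale weakly_nondet_acyclic_negotiation =
  fixes \<N> :: "('p, 'n, 'r) negotiation"
  assumes negotiation: "is_negotiation \<N>"
    and acyclic: "acyclic_neg \<N>"
    and weakly_nondet: "weakly_nondet \<N>"
begin

lemma dm_subset_Proc: "n \<in> Nodes \<N> \<Longrightarrow> dm \<N> n \<subseteq> Proc \<N>"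
  using negotiation by (simp add: is_negotiation_def)

lemma delta_subset_Nodes:
  "n \<in> Nodes \<N> \<Longrightarrow> a \<in> out \<N> n \<Longrightarrow> p \<in> dm \<N> n \<Longrightarrow> delta \<N> n a p \<subseteq> Nodes \<N>"
  using negotiation by (simp add: is_negotiation_def)

lemma Nodes_N_D [simp]: "Nodes (restrict_D \<N>) = Nodes \<N>"
  using weakly_nondet dm_subset_Proc
  by (auto simp: Nodes_restrict_D weakly_nondet_def det_procs_def)

lemma delta_N_D [simp]: "delta (restrict_D \<N>) n a p = delta \<N> n a p \<inter> Nodes \<N>"
  by (simp add: delta_restrict_D)

sublocale D: deterministic_acyclic_negotiation "restrict_D \<N>"
proof
  fix n assume "n \<in> Nodes (restrict_D \<N>)"
  then show "dm (restrict_D \<N>) n \<noteq> {}"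
    by (simp add: Nodes_restrict_D del: Nodes_N_D)
next
  fix n p a assume "n \<in> Nodes (restrict_D \<N>)" "p \<in> dm (restrict_D \<N>) n" "a \<in> out (restrict_D \<N>) n"
  then have n: "n \<in> Nodes \<N>" and p: "p \<in> dm \<N> n" "deterministic \<N> p" and a: "a \<in> out \<N> n"
    by (auto simp: det_procs_def)
  then obtain x where "delta \<N> n a p = {x}" unfolding deterministic_def by blast
  moreover from n a p(1) have "delta \<N> n a p \<subseteq> Nodes \<N>" by (rule delta_subset_Nodes)
  ultimately show "\<exists>x. delta (restrict_D \<N>) n a p = {x}" by auto
next
  have "graph (restrict_D \<N>) \<subseteq> graph \<N>" by (auto simp: graph_def)
  with acyclic show "acyclic (graph (restrict_D \<N>))"
    by (auto simp: acyclic_neg_def intro: acyclic_subset)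
qed auto

definition restrict_config :: "('p \<Rightarrow> 'n set) \<Rightarrow> 'p \<Rightarrow> 'n set" where
  "restrict_config C = (\<lambda>p. if p \<in> det_procs \<N> then C p else {})"

lemma restrict_config_C_init: "restrict_config (C_init \<N>) = C_init (restrict_D \<N>)"
  by (auto simp: restrict_config_def C_init_def det_procs_def fun_eq_iff)

lemma restrict_config_C_fin: "restrict_config (C_fin \<N>) = C_fin (restrict_D \<N>)"
  by (auto simp: restrict_config_def C_fin_def det_procs_def fun_eq_iff)

lemma step_restrict_D:
  assumes "step \<N> C n a C'"
  shows "step (restrict_D \<N>) (restrict_config C) n a (restrict_config C')"
proof -
  from assms have n: "n \<in> Nodes \<N>" and a: "a \<in> out \<N> n"
    and C': "C' = (\<lambda>p. if p \<in> dm \<N> n then delta \<N> n a p else C p)"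
    and "enabled \<N> C n"
    by (auto simp: step_def)
  then have "enabled (restrict_D \<N>) (restrict_config C) n"
    by (auto simp: enabled_def restrict_config_def)
  moreover have "restrict_config C' =
      (\<lambda>p. if p \<in> dm (restrict_D \<N>) n then delta (restrict_D \<N>) n a p else restrict_config C p)"
    using delta_subset_Nodes[OF n a] by (auto simp: C' restrict_config_def fun_eq_iff)
  ultimately show ?thesis using n a by (simp add: step_def)
qed

lemma run_restrict_D: "run \<N> C es C' \<Longrightarrow> run (restrict_D \<N>) (restrict_config C) es (restrict_config C')"
  by (induction rule: run.induct) (auto intro: run.intros step_restrict_D)

lemma run_length_le_card: "run \<N> (C_init \<N>) es C \<Longrightarrow> length es \<le> card (Nodes \<N>)"
proof -
  assume "run \<N> (C_init \<N>) es C"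
  then have run_D: "run (restrict_D \<N>) (C_init (restrict_D \<N>)) es (restrict_config C)"
    using run_restrict_D restrict_config_C_init by metis
  then have "distinct (map fst es)"
    using D.run_distinct_nodes D.singleton_config_C_init by blast
  moreover from run_D have "fst ` set es \<subseteq> Nodes \<N>"
    using run_results by fastforce
  moreover have "finite (Nodes \<N>)" using negotiation by (simp add: is_negotiation_def)
  ultimately show ?thesis by (metis card_mono distinct_card length_map set_map)
qed

text \<open>A step from the final configuration could never be undone in the restriction.\<close>
lemma out_nfin_empty:
  assumes "sound \<N>"
  shows "out \<N> (nfin \<N>) = {}"
proof (rule ccontr)
  assume "out \<N> (nfin \<N>) \<noteq> {}"
  then obtain a where a: "a \<in> out \<N> (nfin \<N>)" by blast
  from negotiation have "nfin \<N> \<in> Nodes \<N>" "dm \<N> (nfin \<N>) = Proc \<N>"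
    by (simp_all add: is_negotiation_def)
  with a obtain C where step: "step \<N> (C_fin \<N>) (nfin \<N>) a C"
    by (auto simp: step_def enabled_def C_fin_def)
  moreover from assms have "reach \<N> (C_init \<N>) (C_fin \<N>)"
    by (simp add: sound_def)
  ultimately have "reach \<N> (C_init \<N>) C"
    by (meson rtranclp.rtrancl_into_rtrancl step_rel_def)
  with assms obtain es where "run \<N> C es (C_fin \<N>)"
    by (auto simp: sound_def reach_iff_run)
  then have "run (restrict_D \<N>) (restrict_config C) es (C_fin (restrict_D \<N>))"
    using run_restrict_D restrict_config_C_fin by metis
  moreover from step have "step (restrict_D \<N>) (C_fin (restrict_D \<N>)) (nfin \<N>) a (restrict_config C)"
    using step_restrict_D restrict_config_C_fin by metis
  moreover have "D.singleton_config (C_fin (restrict_D \<N>))"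
    by (simp add: D.singleton_config_def C_fin_def)
  ultimately show False using D.no_run_back by blast
qed

text \<open>Soundness of \<N> completes every run; as runs from the initial configuration are no
longer than the number of nodes, the completion can be built step by step, always choosing
the result that \<sigma> chose.\<close>
lemma consistent_completion:
  assumes sound: "sound \<N>"
    and results: "\<forall>(m, b)\<in>set \<sigma>. b \<in> out \<N> m" and distinct: "distinct (map fst \<sigma>)"
    and "run \<N> (C_init \<N>) es C"
  shows "\<exists>es'. run \<N> C es' (C_fin \<N>) \<and> consistent_results \<sigma> es'"
  using assms(4)
proof (induction "card (Nodes \<N>) - length es" arbitrary: es C rule: less_induct)
  case less
  show ?case
  proof (cases "C = C_fin \<N>")
    case True
    then have "run \<N> C [] (C_fin \<N>)" by simp
    moreover have "consistent_results \<sigma> []" by (simp add: consistent_results_def)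
    ultimately show ?thesis by blast
  next
    case False
    from less.prems sound have "reach \<N> C (C_fin \<N>)"
      by (auto simp: sound_def reach_iff_run)
    with False obtain m b C1 where m: "step \<N> C m b C1"
      by (metis converse_rtranclpE step_rel_def)
    define b' where "b' = (case map_of \<sigma> m of Some b' \<Rightarrow> b' | None \<Rightarrow> b)"
    have agree: "b'' = b'" if "(m, b'') \<in> set \<sigma>" for b''
      using distinct that by (simp add: b'_def map_of_is_SomeI)
    have "b' \<in> out \<N> m"
      using results m by (auto simp: b'_def step_def split: option.split dest: map_of_SomeD)
    with m obtain C2 where step: "step \<N> C m b' C2" using step_other_result by metis
    with less.prems have run: "run \<N> (C_init \<N>) (es @ [(m, b')]) C2"
      by (auto simp: run_snoc)
    then have "card (Nodes \<N>) - length (es @ [(m, b')]) < card (Nodes \<N>) - length es"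
      using run_length_le_card by fastforce
    with run obtain es' where "run \<N> C2 es' (C_fin \<N>)" "consistent_results \<sigma> es'"
      using less.hyps by blast
    with step agree show ?thesis
      by (intro exI[of _ "(m, b') # es'"]) (auto simp: consistent_results_def)
  qed
qed

lemma sound_restrict_D:
  assumes "sound \<N>"
  shows "sound (restrict_D \<N>)"
  unfolding sound_def
proof (intro allI impI)
  fix C assume "reach (restrict_D \<N>) (C_init (restrict_D \<N>)) C"
  then obtain \<sigma> where \<sigma>: "run (restrict_D \<N>) (C_init (restrict_D \<N>)) \<sigma> C"
    by (auto simp: reach_iff_run)
  then have "distinct (map fst \<sigma>)"
    using D.run_distinct_nodes D.singleton_config_C_init by blast
  moreover from \<sigma> have "\<forall>(m, b)\<in>set \<sigma>. b \<in> out \<N> m"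
    using run_results by fastforce
  ultimately obtain \<tau> where \<tau>: "run \<N> (C_init \<N>) \<tau> (C_fin \<N>)" "consistent_results \<sigma> \<tau>"
    using consistent_completion[OF assms] run_Nil by blast
  then have \<tau>_D: "run (restrict_D \<N>) (C_init (restrict_D \<N>)) \<tau> (C_fin (restrict_D \<N>))"
    using run_restrict_D restrict_config_C_init restrict_config_C_fin by metis
  from out_nfin_empty[OF assms] have "out (restrict_D \<N>) (nfin (restrict_D \<N>)) = {}"
    by simp
  with \<sigma> \<tau>_D \<tau>(2) have "set \<sigma> \<subseteq> set \<tau>"
    by (rule D.consistent_run_subset)
  with \<sigma> \<tau>_D show "reach (restrict_D \<N>) C (C_fin (restrict_D \<N>))"
    using D.reach_of_subset_run D.singleton_config_C_init by blast
qed

end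

theorem lemma4p9:
  fixes \<N> :: "('p, 'n, 'r) negotiation"
  assumes "is_negotiation \<N>"
    and "sound \<N>"
    and "acyclic_neg \<N>"
    and "weakly_nondet \<N>"
  shows "sound (restrict_D \<N>)"
proof -
  interpret weakly_nondet_acyclic_negotiation \<N>
    using assms(1,3,4) by unfold_locales
  from assms(2) show ?thesis by (rule sound_restrict_D)
qed

end
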